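(* Let $H=\{0,1,2,3,4\}$ and $\mathcal R=\{(0,0,0),(0,1,1),(1,0,2),(1,0,3),(1,1,4)\}\subseteq H^3$, and let $\mathcal H=(H;\mathcal R,C_0,C_1,C_2,C_3,C_4)$ where $C_a=\{a\}$. Then $\mathcal H$ is $2$-rigid and has a Mal'tsev polymorphism (hence is strongly rectangular), but $\mathcal H$ is not strongly $2$-rectangular: the relation defined by $\exists^{\equiv2}z\,\mathcal R(x,y,z)$ equals $\{(0,0),(0,1),(1,1)\}$, which is not rectangular.
   Context: $\exists^{\equiv2}z\,\Psi(z)$ holds iff the number of $z$ satisfying $\Psi$ is odd. A Mal'tsev polymorphism is $f:H^3\to H$ with $f(a,a,b)=f(b,a,a)=b$ for all $a,b$, preserving every relation coordinatewise. Strongly rectangular: every pp-definable relation (defined from the relations using conjunction, equality and ordinary existential quantification) of arity $\ge2$ is rectangular; strongly $2$-rectangular: every relation of arity $\ge 2$ definable with $2$-modular quantifiers $\exists^{\equiv2}$ in place of $\exists$ is rectangular. A binary relation is rectangular if $(a,c),(a,d),(b,c)\in\mathcal R$ implies $(b,d)\in\mathcal R$; higher-arity rectangularity means this holds for every split of the coordinates into two nonempty parts. $2$-rigid: no automorphism of order 2. *)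

theory Defs
  imports Main
begin

text \<open>A finite relational structure is given by a domain D and a list of
relations; each relation is a set of tuples, tuples being lists.\<close>

definition Hdom :: "nat set" where "Hdom = {0,1,2,3,4}"

definition Rrel :: "nat list set" where
  "Rrel = {[0,0,0],[0,1,1],[1,0,2],[1,0,3],[1,1,4]}"

definition Crel :: "nat \<Rightarrow> nat list set" where "Crel a = {[a]}"

text \<open>The structure (H; R, C0, C1, C2, C3, C4): relation symbol 0 is R,
relation symbol (a+1) is C_a.\<close>
definition Hrels :: "nat list set list" where
  "Hrels = [Rrel, Crel 0, Crel 1, Crel 2, Crel 3, Crel 4]"

definition preserves3 :: "nat set \<Rightarrow> (nat \<Rightarrow> nat \<Rightarrow> nat \<Rightarrow> nat) \<Rightarrow> nat list set \<Rightarrow> bool" where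
  "preserves3 D f S \<longleftrightarrow> (\<forall>t1\<in>S. \<forall>t2\<in>S. \<forall>t3\<in>S.
      length t1 = length t2 \<and> length t2 = length t3 \<longrightarrow>
      map (\<lambda>i. f (t1!i) (t2!i) (t3!i)) [0..<length t1] \<in> S)"

definition maltsev_polymorphism :: "nat set \<Rightarrow> nat list set list \<Rightarrow> (nat \<Rightarrow> nat \<Rightarrow> nat \<Rightarrow> nat) \<Rightarrow> bool" where
  "maltsev_polymorphism D rels f \<longleftrightarrow>
     (\<forall>a\<in>D. \<forall>b\<in>D. \<forall>c\<in>D. f a b c \<in> D) \<and>
     (\<forall>a\<in>D. \<forall>b\<in>D. f a a b = b \<and> f b a a = b) \<and>
     (\<forall>S\<in>set rels. preserves3 D f S)"

definition automorphism :: "nat set \<Rightarrow> nat list set list \<Rightarrow> (nat \<Rightarrow> nat) \<Rightarrow> bool" where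
  "automorphism D rels g \<longleftrightarrow> bij_betw g D D \<and>
     (\<forall>S\<in>set rels. \<forall>t\<in>lists D. t \<in> S \<longleftrightarrow> map g t \<in> S)"

definition two_rigid :: "nat set \<Rightarrow> nat list set list \<Rightarrow> bool" where
  "two_rigid D rels \<longleftrightarrow> \<not> (\<exists>g. automorphism D rels g \<and>
      (\<forall>x\<in>D. g (g x) = x) \<and> (\<exists>x\<in>D. g x \<noteq> x))"

datatype fm = Atom nat "nat list" | Eq nat nat | Conj fm fm | Ex nat fm | ExPar nat fm

fun sat :: "nat set \<Rightarrow> nat list set list \<Rightarrow> (nat \<Rightarrow> nat) \<Rightarrow> fm \<Rightarrow> bool" where
  "sat D rels s (Atom k vs) = (k < length rels \<and> map s vs \<in> rels ! k)"
| "sat D rels s (Eq x y) = (s x = s y)"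
| "sat D rels s (Conj \<phi> \<psi>) = (sat D rels s \<phi> \<and> sat D rels s \<psi>)"
| "sat D rels s (Ex x \<phi>) = (\<exists>a\<in>D. sat D rels (s(x := a)) \<phi>)"
| "sat D rels s (ExPar x \<phi>) = odd (card {a\<in>D. sat D rels (s(x := a)) \<phi>})"

fun fv :: "fm \<Rightarrow> nat set" where
  "fv (Atom k vs) = set vs"
| "fv (Eq x y) = {x, y}"
| "fv (Conj \<phi> \<psi>) = fv \<phi> \<union> fv \<psi>"
| "fv (Ex x \<phi>) = fv \<phi> - {x}"
| "fv (ExPar x \<phi>) = fv \<phi> - {x}"

fun pp :: "fm \<Rightarrow> bool" where
  "pp (Atom k vs) = True" | "pp (Eq x y) = True" | "pp (Conj \<phi> \<psi>) = (pp \<phi> \<and> pp \<psi>)"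
| "pp (Ex x \<phi>) = pp \<phi>" | "pp (ExPar x \<phi>) = False"

fun mod2fm :: "fm \<Rightarrow> bool" where
  "mod2fm (Atom k vs) = True" | "mod2fm (Eq x y) = True"
| "mod2fm (Conj \<phi> \<psi>) = (mod2fm \<phi> \<and> mod2fm \<psi>)"
| "mod2fm (Ex x \<phi>) = False" | "mod2fm (ExPar x \<phi>) = mod2fm \<phi>"

text \<open>Relation defined by \<phi> with free variables listed (distinctly) in vs.\<close>
definition defrel :: "nat set \<Rightarrow> nat list set list \<Rightarrow> fm \<Rightarrow> nat list \<Rightarrow> nat list set" where
  "defrel D rels \<phi> vs = {map s vs | s. (\<forall>v. s v \<in> D) \<and> sat D rels s \<phi>}"

definition mix :: "nat set \<Rightarrow> nat \<Rightarrow> nat list \<Rightarrow> nat list \<Rightarrow> nat list" where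
  "mix I n u v = map (\<lambda>i. if i \<in> I then u ! i else v ! i) [0..<n]"

definition rectangular :: "nat \<Rightarrow> nat list set \<Rightarrow> bool" where
  "rectangular n S \<longleftrightarrow> (\<forall>I. I \<subseteq> {..<n} \<and> I \<noteq> {} \<and> I \<noteq> {..<n} \<longrightarrow>
     (\<forall>a b c d. length a = n \<and> length b = n \<and> length c = n \<and> length d = n \<and>
        mix I n a c \<in> S \<and> mix I n a d \<in> S \<and> mix I n b c \<in> S \<longrightarrow> mix I n b d \<in> S))"

definition strongly_rectangular :: "nat set \<Rightarrow> nat list set list \<Rightarrow> bool" where
  "strongly_rectangular D rels \<longleftrightarrow> (\<forall>\<phi> vs. pp \<phi> \<and> distinct vs \<and> fv \<phi> \<subseteq> set vs \<and> length vs \<ge> 2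
      \<longrightarrow> rectangular (length vs) (defrel D rels \<phi> vs))"

definition strongly_2_rectangular :: "nat set \<Rightarrow> nat list set list \<Rightarrow> bool" where
  "strongly_2_rectangular D rels \<longleftrightarrow> (\<forall>\<phi> vs. mod2fm \<phi> \<and> distinct vs \<and> fv \<phi> \<subseteq> set vs \<and> length vs \<ge> 2
      \<longrightarrow> rectangular (length vs) (defrel D rels \<phi> vs))"

end

theory Submission
  imports Defs
begin

text \<open>The relation R is the graph of a map z \<mapsto> (x, y) from H onto {0,1} x {0,1} whose fibres are
singletons except the fibre {2, 3} over (1, 0). A Mal'tsev polymorphism is obtained by lifting the
affine operation x + y + z of (Z/2) x (Z/2) along a section of this map; Mal'tsev polymorphisms
preserve pp-definable relations, which forces them to be rectangular. Counting the fibre modulo 2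
instead deletes the pair (1, 0) from the projection of R, leaving the non-rectangular relation
{(0,0), (0,1), (1,1)}. The constants C_a make every automorphism the identity.\<close>

definition xcoord :: "nat \<Rightarrow> nat" where "xcoord z = (if z \<le> 1 then 0 else 1)"
definition ycoord :: "nat \<Rightarrow> nat" where "ycoord z = (if z = 1 \<or> z = 4 then 1 else 0)"

definition lift :: "nat \<Rightarrow> nat \<Rightarrow> nat" where
  "lift x y = (if x = 0 then y else if y = 0 then 2 else 4)"

definition maltsev_H :: "nat \<Rightarrow> nat \<Rightarrow> nat \<Rightarrow> nat" where
  "maltsev_H a b c =
     (if a = b then c else if b = c then a
      else lift ((xcoord a + xcoord b + xcoord c) mod 2) ((ycoord a + ycoord b + ycoord c) mod 2))"

lemma Rrel_graph: "Rrel = (\<lambda>z. [xcoord z, ycoord z, z]) ` Hdom"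
  by (simp add: Rrel_def Hdom_def xcoord_def ycoord_def)

lemma coords_less_2: "xcoord z < 2" "ycoord z < 2"
  by (simp_all add: xcoord_def ycoord_def)

lemma lift_coords:
  assumes "x < 2" "y < 2"
  shows "xcoord (lift x y) = x" "ycoord (lift x y) = y"
  using assms by (auto simp: less_2_cases_iff lift_def xcoord_def ycoord_def)

lemma maltsev_H_Boolean:
  assumes "x < 2" "y < 2" "z < 2"
  shows "maltsev_H x y z = (x + y + z) mod 2"
  using less_2_cases[OF assms(1)] less_2_cases[OF assms(2)] less_2_cases[OF assms(3)]
  by (elim disjE) (simp_all add: maltsev_H_def lift_def xcoord_def ycoord_def)

lemma minority_branch_mod_2:
  fixes q :: "'a \<Rightarrow> nat"
  assumes "\<And>z. q z < 2" and "a \<noteq> b \<Longrightarrow> b \<noteq> c \<Longrightarrow> q w = (q a + q b + q c) mod 2"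
  shows "q (if a = b then c else if b = c then a else w) = (q a + q b + q c) mod 2"
proof -
  have "q a < 2" "q c < 2" using assms(1) by auto
  then have "(q b + q b + q c) mod 2 = q c" "(q a + q c + q c) mod 2 = q a" by presburger+
  with assms(2) show ?thesis by auto
qed

lemma xcoord_maltsev_H: "xcoord (maltsev_H a b c) = maltsev_H (xcoord a) (xcoord b) (xcoord c)"
proof -
  have "xcoord (maltsev_H a b c) = (xcoord a + xcoord b + xcoord c) mod 2"
    unfolding maltsev_H_def
    by (rule minority_branch_mod_2) (simp_all add: coords_less_2 lift_coords)
  also have "\<dots> = maltsev_H (xcoord a) (xcoord b) (xcoord c)"
    by (intro maltsev_H_Boolean[symmetric] coords_less_2)
  finally show ?thesis .
qed

lemma ycoord_maltsev_H: "ycoord (maltsev_H a b c) = maltsev_H (ycoord a) (ycoord b) (ycoord c)"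
proof -
  have "ycoord (maltsev_H a b c) = (ycoord a + ycoord b + ycoord c) mod 2"
    unfolding maltsev_H_def
    by (rule minority_branch_mod_2) (simp_all add: coords_less_2 lift_coords)
  also have "\<dots> = maltsev_H (ycoord a) (ycoord b) (ycoord c)"
    by (intro maltsev_H_Boolean[symmetric] coords_less_2)
  finally show ?thesis .
qed

lemma maltsev_H_closed: "a \<in> Hdom \<Longrightarrow> b \<in> Hdom \<Longrightarrow> c \<in> Hdom \<Longrightarrow> maltsev_H a b c \<in> Hdom"
  by (auto simp: Hdom_def maltsev_H_def lift_def)

lemma maltsev_H_preserves_Rrel: "preserves3 Hdom maltsev_H Rrel"
  unfolding preserves3_def
proof (intro ballI impI)
  fix t1 t2 t3 assume "t1 \<in> Rrel" "t2 \<in> Rrel" "t3 \<in> Rrel"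
  then obtain z1 z2 z3 where z: "z1 \<in> Hdom" "z2 \<in> Hdom" "z3 \<in> Hdom"
    and t: "t1 = [xcoord z1, ycoord z1, z1]" "t2 = [xcoord z2, ycoord z2, z2]"
           "t3 = [xcoord z3, ycoord z3, z3]"
    unfolding Rrel_graph by blast
  let ?z = "maltsev_H z1 z2 z3"
  have "map (\<lambda>i. maltsev_H (t1 ! i) (t2 ! i) (t3 ! i)) [0..<length t1] = [xcoord ?z, ycoord ?z, ?z]"
    by (simp add: t upt_rec xcoord_maltsev_H ycoord_maltsev_H)
  moreover have "?z \<in> Hdom" using z by (rule maltsev_H_closed)
  ultimately show "map (\<lambda>i. maltsev_H (t1 ! i) (t2 ! i) (t3 ! i)) [0..<length t1] \<in> Rrel"
    unfolding Rrel_graph by auto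
qed

lemma idempotent_preserves_Crel:
  assumes "f a a a = a"
  shows "preserves3 D f (Crel a)"
  using assms by (simp add: preserves3_def Crel_def)

lemma maltsev_polymorphism_H: "maltsev_polymorphism Hdom Hrels maltsev_H"
  unfolding maltsev_polymorphism_def
proof (intro conjI)
  show "\<forall>a\<in>Hdom. \<forall>b\<in>Hdom. \<forall>c\<in>Hdom. maltsev_H a b c \<in> Hdom"
    by (simp add: maltsev_H_closed)
  show "\<forall>a\<in>Hdom. \<forall>b\<in>Hdom. maltsev_H a a b = b \<and> maltsev_H b a a = b"
    by (simp add: maltsev_H_def)
  show "\<forall>S\<in>set Hrels. preserves3 Hdom maltsev_H S"
    by (auto simp: Hrels_def maltsev_H_preserves_Rrel maltsev_H_def intro: idempotent_preserves_Crel)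
qed

lemma sat_pp_polymorphism:
  assumes closed: "\<forall>a\<in>D. \<forall>b\<in>D. \<forall>c\<in>D. f a b c \<in> D"
    and preserves: "\<forall>S\<in>set rels. preserves3 D f S"
    and "pp \<phi>" "\<forall>v. s1 v \<in> D" "\<forall>v. s2 v \<in> D" "\<forall>v. s3 v \<in> D"
    and "sat D rels s1 \<phi>" "sat D rels s2 \<phi>" "sat D rels s3 \<phi>"
  shows "sat D rels (\<lambda>v. f (s1 v) (s2 v) (s3 v)) \<phi>"
  using assms(3-)
proof (induction \<phi> arbitrary: s1 s2 s3)
  case (Atom k vs)
  then have k: "k < length rels"
    and "map s1 vs \<in> rels ! k" "map s2 vs \<in> rels ! k" "map s3 vs \<in> rels ! k" by auto
  moreover have "preserves3 D f (rels ! k)" using preserves k by simp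
  ultimately have "map (\<lambda>i. f (map s1 vs ! i) (map s2 vs ! i) (map s3 vs ! i)) [0..<length vs]
      \<in> rels ! k"
    unfolding preserves3_def by fastforce
  moreover have "map (\<lambda>i. f (map s1 vs ! i) (map s2 vs ! i) (map s3 vs ! i)) [0..<length vs]
      = map (\<lambda>v. f (s1 v) (s2 v) (s3 v)) vs"
    by (rule nth_equalityI) auto
  ultimately show ?case using k by simp
next
  case (Ex x \<phi>)
  then obtain a1 a2 a3 where a: "a1 \<in> D" "a2 \<in> D" "a3 \<in> D"
    and sat: "sat D rels (s1(x := a1)) \<phi>" "sat D rels (s2(x := a2)) \<phi>" "sat D rels (s3(x := a3)) \<phi>"
    by auto
  have "pp \<phi>" using Ex.prems by simp
  moreover have "\<forall>v. (s1(x := a1)) v \<in> D" "\<forall>v. (s2(x := a2)) v \<in> D" "\<forall>v. (s3(x := a3)) v \<in> D"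
    using Ex.prems a by auto
  ultimately have "sat D rels (\<lambda>v. f ((s1(x := a1)) v) ((s2(x := a2)) v) ((s3(x := a3)) v)) \<phi>"
    using sat by (rule Ex.IH)
  moreover have "(\<lambda>v. f ((s1(x := a1)) v) ((s2(x := a2)) v) ((s3(x := a3)) v))
      = (\<lambda>v. f (s1 v) (s2 v) (s3 v))(x := f a1 a2 a3)" by auto
  moreover have "f a1 a2 a3 \<in> D" using closed a by blast
  ultimately show ?case by auto
qed simp_all

lemma nth_mix: "i < n \<Longrightarrow> mix I n u v ! i = (if i \<in> I then u ! i else v ! i)"
  by (simp add: mix_def)

lemma maltsev_strongly_rectangular:
  assumes M: "maltsev_polymorphism D rels f"
  shows "strongly_rectangular D rels"
  unfolding strongly_rectangular_def rectangular_def
proof (intro allI impI, elim conjE)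
  fix \<phi> and vs :: "nat list" and I a b c d
  let ?n = "length vs"
  assume pp: "pp \<phi>"
    and "mix I ?n a c \<in> defrel D rels \<phi> vs" "mix I ?n a d \<in> defrel D rels \<phi> vs"
        "mix I ?n b c \<in> defrel D rels \<phi> vs"
  then obtain s1 s2 s3 where D: "\<forall>v. s1 v \<in> D" "\<forall>v. s2 v \<in> D" "\<forall>v. s3 v \<in> D"
    and sat: "sat D rels s1 \<phi>" "sat D rels s2 \<phi>" "sat D rels s3 \<phi>"
    and tuples: "mix I ?n a c = map s1 vs" "mix I ?n a d = map s2 vs" "mix I ?n b c = map s3 vs"
    unfolding defrel_def by blast
  have closed: "\<forall>a\<in>D. \<forall>b\<in>D. \<forall>c\<in>D. f a b c \<in> D"
    and maltsev: "\<And>x y. x \<in> D \<Longrightarrow> y \<in> D \<Longrightarrow> f x x y = y \<and> f y x x = y"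
    and preserves: "\<forall>S\<in>set rels. preserves3 D f S"
    using M unfolding maltsev_polymorphism_def by auto
  define s where "s v = f (s3 v) (s1 v) (s2 v)" for v
  have "\<forall>v. s v \<in> D" using closed D by (simp add: s_def)
  moreover have "sat D rels s \<phi>"
    unfolding s_def using closed preserves pp D(3,1,2) sat(3,1,2) by (rule sat_pp_polymorphism)
  moreover have "mix I ?n b d = map s vs"
  proof (rule nth_equalityI)
    fix i assume "i < length (mix I ?n b d)"
    then have i: "i < ?n" by (simp add: mix_def)
    have "s1 (vs ! i) = (if i \<in> I then a ! i else c ! i)"
         "s2 (vs ! i) = (if i \<in> I then a ! i else d ! i)"
         "s3 (vs ! i) = (if i \<in> I then b ! i else c ! i)"
      using tuples[THEN arg_cong[where f = "\<lambda>l. l ! i"]] i by (simp_all add: nth_mix)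
    moreover have "s1 (vs ! i) \<in> D" "s2 (vs ! i) \<in> D" "s3 (vs ! i) \<in> D" using D by auto
    ultimately show "mix I ?n b d ! i = map s vs ! i"
      using i maltsev by (cases "i \<in> I") (simp_all add: s_def nth_mix)
  qed (simp add: mix_def)
  ultimately show "mix I ?n b d \<in> defrel D rels \<phi> vs"
    unfolding defrel_def by blast
qed

lemma automorphism_fixes_constant:
  assumes "automorphism D rels g" "Crel x \<in> set rels" "x \<in> D"
  shows "g x = x"
proof -
  have "[x] \<in> Crel x \<longleftrightarrow> map g [x] \<in> Crel x"
    using assms unfolding automorphism_def by (meson Cons_in_lists_iff lists.Nil)
  then show ?thesis by (simp add: Crel_def)
qed

lemma two_rigid_H: "two_rigid Hdom Hrels"
  unfolding two_rigid_def
  using automorphism_fixes_constant by (fastforce simp: Hdom_def Hrels_def)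

lemma Rrel_fibre:
  "{z \<in> Hdom. [x, y, z] \<in> Rrel} =
     (if x = 0 \<and> y = 0 then {0} else if x = 0 \<and> y = 1 then {1}
      else if x = 1 \<and> y = 0 then {2, 3} else if x = 1 \<and> y = 1 then {4} else {})"
  unfolding Hdom_def Rrel_def by auto

lemma sat_parity_projection:
  "sat Hdom Hrels s (ExPar 2 (Atom 0 [0, 1, 2])) \<longleftrightarrow> [s 0, s 1] \<in> {[0,0], [0,1], [1,1]}"
proof -
  have "sat Hdom Hrels s (ExPar 2 (Atom 0 [0, 1, 2])) \<longleftrightarrow> odd (card {z \<in> Hdom. [s 0, s 1, z] \<in> Rrel})"
    by (simp add: Hrels_def)
  also have "\<dots> \<longleftrightarrow> [s 0, s 1] \<in> {[0,0], [0,1], [1,1]}"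
    unfolding Rrel_fibre by auto
  finally show ?thesis .
qed

lemma defrel_parity_projection:
  "defrel Hdom Hrels (ExPar 2 (Atom 0 [0, 1, 2])) [0, 1] = {[0,0], [0,1], [1,1]}"
proof (intro equalityI subsetI)
  fix t assume "t \<in> defrel Hdom Hrels (ExPar 2 (Atom 0 [0, 1, 2])) [0, 1]"
  then show "t \<in> {[0,0], [0,1], [1,1]}"
    unfolding defrel_def sat_parity_projection by auto
next
  fix t :: "nat list" assume t: "t \<in> {[0,0], [0,1], [1,1]}"
  then obtain x y where xy: "t = [x, y]" "x \<in> {0, 1}" "y \<in> {0, 1}" by blast
  define s where "s v = (if v = 0 then x else if v = 1 then y else 0)" for v :: nat
  have "\<forall>v. s v \<in> Hdom" "t = map s [0, 1]" using xy by (auto simp: s_def Hdom_def)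
  moreover have "sat Hdom Hrels s (ExPar 2 (Atom 0 [0, 1, 2]))"
    unfolding sat_parity_projection using t xy by (simp add: s_def)
  ultimately show "t \<in> defrel Hdom Hrels (ExPar 2 (Atom 0 [0, 1, 2])) [0, 1]"
    unfolding defrel_def by blast
qed

lemma strongly_2_rectangularD:
  assumes "strongly_2_rectangular D rels" "mod2fm \<phi>" "distinct vs" "fv \<phi> \<subseteq> set vs" "2 \<le> length vs"
  shows "rectangular (length vs) (defrel D rels \<phi> vs)"
  using assms unfolding strongly_2_rectangular_def by blast

lemma rectangular_binaryD:
  assumes "rectangular 2 S" "[a, c] \<in> S" "[a, d] \<in> S" "[b, c] \<in> S"
  shows "[b, d] \<in> S"
proof -
  have mix: "mix {0} 2 u v = [u ! 0, v ! 1]" for u v :: "nat list"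
    by (simp add: mix_def numeral_2_eq_2)
  have proper: "{0::nat} \<noteq> {..<2}"
  proof
    assume "{0::nat} = {..<2}"
    then have "(1::nat) \<in> {0}" by simp
    then show False by simp
  qed
  have "mix {0} 2 [b, b] [d, d] \<in> S"
    using assms(1)[unfolded rectangular_def, rule_format, of "{0}" "[a, a]" "[b, b]" "[c, c]" "[d, d]"]
      proper assms(2-4) by (simp add: mix)
  then show ?thesis by (simp add: mix)
qed

lemma not_rectangular_parity_projection: "\<not> rectangular 2 {[0,0], [0,1], [1::nat, 1]}"
  using rectangular_binaryD[of _ 0 1 0 1] by auto

theorem mainTheorem14:
  shows "two_rigid Hdom Hrels
    \<and> (\<exists>f. maltsev_polymorphism Hdom Hrels f)
    \<and> strongly_rectangular Hdom Hrels
    \<and> \<not> strongly_2_rectangular Hdom Hrels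
    \<and> defrel Hdom Hrels (ExPar 2 (Atom 0 [0, 1, 2])) [0, 1] = {[0,0],[0,1],[1,1]}
    \<and> \<not> rectangular 2 (defrel Hdom Hrels (ExPar 2 (Atom 0 [0, 1, 2])) [0, 1])"
proof -
  have not_rect: "\<not> rectangular 2 (defrel Hdom Hrels (ExPar 2 (Atom 0 [0, 1, 2])) [0, 1])"
    unfolding defrel_parity_projection by (rule not_rectangular_parity_projection)
  moreover have "\<not> strongly_2_rectangular Hdom Hrels"
    using strongly_2_rectangularD[of Hdom Hrels "ExPar 2 (Atom 0 [0, 1, 2])" "[0, 1]"] not_rect
    by (auto simp: numeral_2_eq_2)
  ultimately show ?thesis
    using two_rigid_H maltsev_polymorphism_H maltsev_strongly_rectangular defrel_parity_projection
    by blast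
qed

end
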